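(* Let $G$ be a simple graph on $n$ vertices with $cM_2(G)\ge cM_2(H)$ for every simple graph $H$ on $n$ vertices, and let $F$, $Y$ be as defined in the context. If $u,v\in Y$ and $uv\in E(G)$, then $uv$ is not an undirected edge of $F$ (equivalently, $d_G(u)\ne d_G(v)$).
   Context: All graphs are finite and simple; $d_G(u)$ is the degree of $u$ and $cM_2(G)=\sum_{uv\in E(G)}|d_G(u)^2-d_G(v)^2|$. The canonical mixed graph $F$ of $G$ has vertex set $V(G)$; for each edge $uv\in E(G)$: if $d_G(u)>d_G(v)$ then $F$ contains the arc $\overrightarrow{uv}$, and if $d_G(u)=d_G(v)$ then $F$ contains the undirected edge $uv$. $d^+_F(u)$ (resp. $d^-_F(u)$) is the number of arcs of $F$ with tail (resp. head) $u$. $Y=\{u\in V(G): d^+_F(u)< d^-_F(u)\}$. *)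

theory Defs
  imports Main
begin

definition simple_graph :: "'a set \<Rightarrow> 'a set set \<Rightarrow> bool" where
  "simple_graph V E \<longleftrightarrow> finite V \<and> (\<forall>e\<in>E. e \<subseteq> V \<and> card e = 2)"

definition deg :: "'a set set \<Rightarrow> 'a \<Rightarrow> nat" where
  "deg E u = card {e \<in> E. u \<in> e}"

definition cM2 :: "'a set set \<Rightarrow> nat" where
  "cM2 E = (\<Sum>e\<in>E. THE k. \<exists>u v. e = {u, v} \<and>
       k = nat \<bar>int (deg E u ^ 2) - int (deg E v ^ 2)\<bar>)"

definition F_arcs :: "'a set set \<Rightarrow> ('a \<times> 'a) set" where
  "F_arcs E = {(u, v). {u, v} \<in> E \<and> deg E u > deg E v}"

definition F_undir :: "'a set set \<Rightarrow> 'a set set" where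
  "F_undir E = {e \<in> E. \<exists>u v. e = {u, v} \<and> deg E u = deg E v}"

definition out_deg :: "'a set set \<Rightarrow> 'a \<Rightarrow> nat" where
  "out_deg E u = card {v. (u, v) \<in> F_arcs E}"

definition in_deg :: "'a set set \<Rightarrow> 'a \<Rightarrow> nat" where
  "in_deg E u = card {v. (v, u) \<in> F_arcs E}"

definition Yset :: "'a set \<Rightarrow> 'a set set \<Rightarrow> 'a set" where
  "Yset V E = {u \<in> V. out_deg E u < in_deg E u}"

end

theory Submission
  imports Defs
begin

text \<open>Let u, v \<in> Y be adjacent with d(u) = d(v) = d and delete the edge uv. Its own term
  |d^2 - d^2| = 0 disappears, only edges at u or v change, and for a neighbour w of u the term
  |d^2 - d(w)^2| becomes |(d-1)^2 - d(w)^2|, i.e. it grows by 2d - 1 if d(w) \<ge> d and shrinks by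
  2d - 1 if d(w) < d. The first kind of neighbour includes all in-neighbours of u in F, the
  second kind are exactly its out-neighbours, so u \<in> Y makes the total change at u positive;
  likewise at v. Hence cM2 strictly increases, contradicting maximality.\<close>

definition edge_weight :: "'a set set \<Rightarrow> 'a set \<Rightarrow> nat" where
  "edge_weight E e = (THE k. \<exists>u v. e = {u, v} \<and> k = nat \<bar>int (deg E u ^ 2) - int (deg E v ^ 2)\<bar>)"

definition neighbours :: "'a set set \<Rightarrow> 'a \<Rightarrow> 'a set" where
  "neighbours E x = {w. {x, w} \<in> E}"

lemma cM2_eq_sum_edge_weight: "cM2 E = (\<Sum>e\<in>E. edge_weight E e)"
  unfolding cM2_def edge_weight_def by simp

lemma edge_weight_doubleton:
  "edge_weight E {x, y} = nat \<bar>int (deg E x ^ 2) - int (deg E y ^ 2)\<bar>"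
  unfolding edge_weight_def
proof (rule the_equality)
  fix k assume "\<exists>a b. {x, y} = {a, b} \<and> k = nat \<bar>int (deg E a ^ 2) - int (deg E b ^ 2)\<bar>"
  then show "k = nat \<bar>int (deg E x ^ 2) - int (deg E y ^ 2)\<bar>"
    by (auto simp: doubleton_eq_iff abs_minus_commute)
qed blast

lemma abs_square_diff_pred:
  fixes a d :: nat
  assumes "1 \<le> d"
  shows "int (nat \<bar>int ((d - 1) ^ 2) - int (a ^ 2)\<bar>) - int (nat \<bar>int (d ^ 2) - int (a ^ 2)\<bar>)
           = (if d \<le> a then 2 * int d - 1 else 1 - 2 * int d)"
proof -
  obtain k where d: "d = Suc k" using assms by (cases d) auto
  define A K D where "A = int (a ^ 2)" and "K = int (k ^ 2)" and "D = int (d ^ 2)"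
  have step: "D = K + 2 * int k + 1"
    unfolding D_def K_def d by (simp add: power2_eq_square algebra_simps)
  have "K \<le> D" unfolding K_def D_def d by (simp add: power_mono)
  moreover have "D \<le> A" if "d \<le> a" unfolding A_def D_def using that by (simp add: power_mono)
  moreover have "A \<le> K" if "\<not> d \<le> a" unfolding A_def K_def using that d by (simp add: power_mono)
  ultimately have "int (nat \<bar>K - A\<bar>) - int (nat \<bar>D - A\<bar>) = (if d \<le> a then 2 * int d - 1 else 1 - 2 * int d)"
    using step d by (cases "d \<le> a") simp_all
  moreover have "d - 1 = k" using d by simp
  ultimately show ?thesis unfolding A_def K_def D_def by simp
qed

lemma finite_edges: "simple_graph V E \<Longrightarrow> finite E"
  unfolding simple_graph_def by (meson PowI finite_Pow_iff finite_subset subsetI)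

lemma simple_graph_Diff: "simple_graph V E \<Longrightarrow> simple_graph V (E - A)"
  unfolding simple_graph_def by auto

lemma simple_graph_edgeE:
  assumes "simple_graph V E" "e \<in> E"
  obtains a b where "e = {a, b}" "a \<noteq> b"
  using assms unfolding simple_graph_def by (metis card_2_iff)

lemma finite_neighbours:
  assumes "simple_graph V E"
  shows "finite (neighbours E x)"
proof -
  have "neighbours E x \<subseteq> V" using assms unfolding simple_graph_def neighbours_def by auto
  then show ?thesis using assms unfolding simple_graph_def by (auto intro: finite_subset)
qed

lemma not_in_neighbours_self: "simple_graph V E \<Longrightarrow> x \<notin> neighbours E x"
  unfolding simple_graph_def neighbours_def by force

lemma deg_remove_edge_other:
  assumes "w \<noteq> x" "w \<noteq> y"
  shows "deg (E - {{x, y}}) w = deg E w"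
proof -
  have "{e \<in> E - {{x, y}}. w \<in> e} = {e \<in> E. w \<in> e}" using assms by auto
  then show ?thesis unfolding deg_def by simp
qed

lemma deg_remove_edge_endpoint:
  assumes "finite E" "{x, y} \<in> E"
  shows "deg (E - {{x, y}}) x = deg E x - 1" and "1 \<le> deg E x"
proof -
  have "{e \<in> E - {{x, y}}. x \<in> e} = {e \<in> E. x \<in> e} - {{x, y}}" by auto
  then show "deg (E - {{x, y}}) x = deg E x - 1"
    unfolding deg_def using assms by (simp add: card_Diff_singleton)
  have "{x, y} \<in> {e \<in> E. x \<in> e}" using assms(2) by simp
  then show "1 \<le> deg E x"
    unfolding deg_def using assms(1) by (auto simp: Suc_le_eq card_gt_0_iff)
qed

lemma edges_at_remove_edge:
  assumes "simple_graph V E"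
  shows "{e \<in> E - {{x, y}}. x \<in> e} = (\<lambda>w. {x, w}) ` (neighbours E x - {y})"
proof (intro equalityI subsetI)
  fix e assume e: "e \<in> {e \<in> E - {{x, y}}. x \<in> e}"
  then obtain a b where "e = {a, b}"
    using simple_graph_edgeE[OF assms] by blast
  with e obtain w where "e = {x, w}" by auto
  with e show "e \<in> (\<lambda>w. {x, w}) ` (neighbours E x - {y})"
    unfolding neighbours_def by auto
qed (auto simp: neighbours_def doubleton_eq_iff)

text \<open>Since d(x) = d(y), the neighbour y has no arc to or from x, so leaving it out of the
  neighbourhood does not affect the in- and out-degree count.\<close>

lemma weight_gain_at_endpoint:
  assumes sg: "simple_graph V E" and xy: "{x, y} \<in> E" and deg_eq: "deg E x = deg E y"
    and Y: "out_deg E x < in_deg E x"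
  shows "1 \<le> (\<Sum>e\<in>{e \<in> E - {{x, y}}. x \<in> e}.
                int (edge_weight (E - {{x, y}}) e) - int (edge_weight E e))"
proof -
  define E' where "E' = E - {{x, y}}"
  define N where "N = neighbours E x - {y}"
  define d where "d = deg E x"
  define c :: int where "c = 2 * int d - 1"
  have fE: "finite E" using finite_edges[OF sg] .
  have d1: "1 \<le> d" and deg'x: "deg E' x = d - 1"
    using deg_remove_edge_endpoint[OF fE xy] unfolding E'_def d_def by simp_all
  have c1: "1 \<le> c" using d1 unfolding c_def by simp
  have fN: "finite N" unfolding N_def using finite_neighbours[OF sg] by simp
  have gain: "c * (of_bool (d < deg E w) - of_bool (deg E w < d))
                \<le> int (edge_weight E' {x, w}) - int (edge_weight E {x, w})" if "w \<in> N" for w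
  proof -
    have "w \<noteq> x" "w \<noteq> y" using that not_in_neighbours_self[OF sg] unfolding N_def by auto
    then have "deg E' w = deg E w" unfolding E'_def by (rule deg_remove_edge_other)
    with abs_square_diff_pred[OF d1, of "deg E w"] d1 show ?thesis
      unfolding edge_weight_doubleton deg'x d_def[symmetric] c_def by auto
  qed
  have in_nbrs: "N \<inter> {w. d < deg E w} = {w. (w, x) \<in> F_arcs E}"
    unfolding N_def neighbours_def F_arcs_def d_def using deg_eq by (auto simp: insert_commute)
  have out_nbrs: "N \<inter> {w. deg E w < d} = {w. (x, w) \<in> F_arcs E}"
    unfolding N_def neighbours_def F_arcs_def d_def using deg_eq by auto
  have "c \<le> c * (int (in_deg E x) - int (out_deg E x))"
    using Y c1 by (simp add: mult_le_cancel_left1)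
  also have "\<dots> = (\<Sum>w\<in>N. c * (of_bool (d < deg E w) - of_bool (deg E w < d)))"
    using fN unfolding in_deg_def out_deg_def in_nbrs[symmetric] out_nbrs[symmetric]
    by (simp add: sum_distrib_left[symmetric] sum_subtractf)
  also have "\<dots> \<le> (\<Sum>w\<in>N. int (edge_weight E' {x, w}) - int (edge_weight E {x, w}))"
    using gain by (rule sum_mono)
  also have "\<dots> = (\<Sum>e\<in>{e \<in> E'. x \<in> e}. int (edge_weight E' e) - int (edge_weight E e))"
    unfolding E'_def N_def edges_at_remove_edge[OF sg]
    by (simp add: sum.reindex inj_on_def doubleton_eq_iff)
  finally show ?thesis using c1 unfolding E'_def by linarith
qed

text \<open>No remaining edge passes through both x and y, so the two stars are disjoint.\<close>

lemma cM2_remove_edge: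
  assumes sg: "simple_graph V E" and xy: "{x, y} \<in> E"
  defines "D \<equiv> \<lambda>e. int (edge_weight (E - {{x, y}}) e) - int (edge_weight E e)"
  shows "int (cM2 (E - {{x, y}})) - int (cM2 E)
           = (\<Sum>e\<in>{e \<in> E - {{x, y}}. x \<in> e}. D e) + (\<Sum>e\<in>{e \<in> E - {{x, y}}. y \<in> e}. D e)
             - int (edge_weight E {x, y})"
proof -
  define E' where "E' = E - {{x, y}}"
  have fE': "finite E'" unfolding E'_def using finite_edges[OF sg] by simp
  have x_ne_y: "x \<noteq> y" using simple_graph_edgeE[OF sg xy] by (metis doubleton_eq_iff)
  have localised: "D e = (if x \<in> e then D e else 0) + (if y \<in> e then D e else 0)" if "e \<in> E'" for e
  proof -
    have eE: "e \<in> E" "e \<noteq> {x, y}" using that unfolding E'_def by auto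
    then obtain a b where ab: "e = {a, b}" using simple_graph_edgeE[OF sg] by blast
    show ?thesis
    proof (cases "x \<in> e \<or> y \<in> e")
      case True
      then show ?thesis using ab eE x_ne_y by auto
    next
      case False
      then have "x \<notin> {a, b}" "y \<notin> {a, b}" unfolding ab(1) by simp_all
      moreover from this have "deg (E - {{x, y}}) a = deg E a" "deg (E - {{x, y}}) b = deg E b"
        by (auto intro: deg_remove_edge_other)
      ultimately show ?thesis unfolding D_def ab(1) edge_weight_doubleton by simp
    qed
  qed
  have "int (cM2 E) = (\<Sum>e\<in>E'. int (edge_weight E e)) + int (edge_weight E {x, y})"
    unfolding cM2_eq_sum_edge_weight E'_def using finite_edges[OF sg] xy
    by (simp add: sum.remove)
  moreover have "(\<Sum>e\<in>E'. D e) = (\<Sum>e\<in>{e \<in> E'. x \<in> e}. D e) + (\<Sum>e\<in>{e \<in> E'. y \<in> e}. D e)"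
    using fE' localised by (simp add: sum.distrib[symmetric] sum.inter_filter cong: sum.cong)
  ultimately show ?thesis
    unfolding cM2_eq_sum_edge_weight D_def E'_def by (simp add: sum_subtractf)
qed

theorem claim2:
  fixes V :: "'a set" and E :: "'a set set"
  assumes "simple_graph V E"
    and "\<And>E'. simple_graph V E' \<Longrightarrow> cM2 E' \<le> cM2 E"
    and "u \<in> Yset V E" and "v \<in> Yset V E" and "{u, v} \<in> E"
  shows "{u, v} \<notin> F_undir E"
proof
  assume "{u, v} \<in> F_undir E"
  then have deg_eq: "deg E u = deg E v"
    unfolding F_undir_def by (auto simp: doubleton_eq_iff)
  have vu: "{v, u} \<in> E" using assms(5) by (simp add: insert_commute)
  have "1 \<le> (\<Sum>e\<in>{e \<in> E - {{u, v}}. u \<in> e}.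
                int (edge_weight (E - {{u, v}}) e) - int (edge_weight E e))"
    using weight_gain_at_endpoint[OF assms(1,5) deg_eq] assms(3) unfolding Yset_def by simp
  moreover have "1 \<le> (\<Sum>e\<in>{e \<in> E - {{u, v}}. v \<in> e}.
                int (edge_weight (E - {{u, v}}) e) - int (edge_weight E e))"
    using weight_gain_at_endpoint[OF assms(1) vu deg_eq[symmetric]] assms(4)
    unfolding Yset_def by (simp add: insert_commute)
  moreover have "edge_weight E {u, v} = 0" unfolding edge_weight_doubleton using deg_eq by simp
  ultimately have "int (cM2 E) < int (cM2 (E - {{u, v}}))"
    using cM2_remove_edge[OF assms(1,5)] by linarith
  with assms(2)[OF simple_graph_Diff[OF assms(1), of "{{u, v}}"]] show False by linarith
qed

end
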